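(* Let $0<\delta<\frac12$, and let $T_0$ be an $N_0$-vertex tournament which is $\delta^2$-close to transitive. Then there exist an integer $N\geq(1-\delta)N_0$, an $N$-vertex subtournament $T$ of $T_0$, and an ordered graph $G$ on the vertex set of $T$ such that $G$ is consistent with $T$ and every vertex of $G$ has at most $4\delta N$ non-neighbors in $G$.
   Context: A tournament is an orientation of a complete graph; a subtournament is the tournament induced on a subset of vertices. An $N$-vertex tournament is $\delta$-close to transitive if it can be made transitive by reversing the orientation of at most $\delta N^2$ edges. An ordered graph is a graph with a linear order $\prec$ on its vertex set. An ordered graph $G$ is consistent with a tournament $T$ on the same vertex set if for all vertices $v\prec w$, $vw\in E(G)$ if and only if $v\to w$ in $T$. *)

theory Defs
  imports Complex_Main
begin

text \<open>A tournament on a finite vertex set V, with arc relation A (A v w means v \<rightarrow> w).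
  Only the values of A on V matter.\<close>
definition tournament :: "'a set \<Rightarrow> ('a \<Rightarrow> 'a \<Rightarrow> bool) \<Rightarrow> bool" where
  "tournament V A \<longleftrightarrow> finite V \<and> (\<forall>v\<in>V. \<not> A v v) \<and>
     (\<forall>v\<in>V. \<forall>w\<in>V. v \<noteq> w \<longrightarrow> (A v w \<longleftrightarrow> \<not> A w v))"

definition transitive_tournament :: "'a set \<Rightarrow> ('a \<Rightarrow> 'a \<Rightarrow> bool) \<Rightarrow> bool" where
  "transitive_tournament V A \<longleftrightarrow> tournament V A \<and>
     (\<forall>u\<in>V. \<forall>v\<in>V. \<forall>w\<in>V. A u v \<and> A v w \<longrightarrow> A u w)"

definition reversed_edges :: "'a set \<Rightarrow> ('a \<Rightarrow> 'a \<Rightarrow> bool) \<Rightarrow> ('a \<Rightarrow> 'a \<Rightarrow> bool) \<Rightarrow> 'a set set" where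
  "reversed_edges V A B = {{v, w} | v w. v \<in> V \<and> w \<in> V \<and> v \<noteq> w \<and> A v w \<and> \<not> B v w}"

definition close_to_transitive :: "'a set \<Rightarrow> ('a \<Rightarrow> 'a \<Rightarrow> bool) \<Rightarrow> real \<Rightarrow> bool" where
  "close_to_transitive V A \<delta> \<longleftrightarrow>
     (\<exists>B. transitive_tournament V B \<and>
          real (card (reversed_edges V A B)) \<le> \<delta> * (real (card V))\<^sup>2)"

definition strict_lin_order_on :: "'a set \<Rightarrow> ('a \<Rightarrow> 'a \<Rightarrow> bool) \<Rightarrow> bool" where
  "strict_lin_order_on S lt \<longleftrightarrow> (\<forall>v\<in>S. \<not> lt v v) \<and>
     (\<forall>u\<in>S. \<forall>v\<in>S. \<forall>w\<in>S. lt u v \<and> lt v w \<longrightarrow> lt u w) \<and>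
     (\<forall>v\<in>S. \<forall>w\<in>S. v \<noteq> w \<longrightarrow> lt v w \<or> lt w v)"

definition simple_graph_on :: "'a set \<Rightarrow> ('a \<Rightarrow> 'a \<Rightarrow> bool) \<Rightarrow> bool" where
  "simple_graph_on S E \<longleftrightarrow> (\<forall>v\<in>S. \<not> E v v) \<and> (\<forall>v\<in>S. \<forall>w\<in>S. E v w \<longleftrightarrow> E w v)"

definition consistent :: "'a set \<Rightarrow> ('a \<Rightarrow> 'a \<Rightarrow> bool) \<Rightarrow> ('a \<Rightarrow> 'a \<Rightarrow> bool) \<Rightarrow> ('a \<Rightarrow> 'a \<Rightarrow> bool) \<Rightarrow> bool" where
  "consistent S lt E A \<longleftrightarrow> (\<forall>v\<in>S. \<forall>w\<in>S. lt v w \<longrightarrow> (E v w \<longleftrightarrow> A v w))"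

definition non_neighbours :: "'a set \<Rightarrow> ('a \<Rightarrow> 'a \<Rightarrow> bool) \<Rightarrow> 'a \<Rightarrow> 'a set" where
  "non_neighbours S E v = {u \<in> S. u \<noteq> v \<and> \<not> E v u}"

end

theory Submission
  imports Defs
begin

text \<open>Let B be a transitive tournament differing from A on at most \<delta>^2 N_0^2 edges. Each reversed
  edge is counted at both of its ends, so the vertices are incident to at most 2 \<delta>^2 N_0^2
  reversed edges in total, and by Markov's inequality at most \<delta> N_0 vertices are incident to more
  than 2 \<delta> N_0 of them. Delete these vertices, order the rest by B and join two of them when A and
  B agree on their edge. This ordered graph is consistent with A, and a non-neighbour of v is the
  other end of a reversed edge at v, so v has at most 2 \<delta> N_0 \<le> 4 \<delta> N of them, because
  N \<ge> (1 - \<delta>) N_0 \<ge> N_0 / 2.\<close>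

definition disagreements :: "'a set \<Rightarrow> ('a \<Rightarrow> 'a \<Rightarrow> bool) \<Rightarrow> ('a \<Rightarrow> 'a \<Rightarrow> bool) \<Rightarrow> 'a \<Rightarrow> 'a set" where
  "disagreements V A B v = {u \<in> V. u \<noteq> v \<and> A v u \<noteq> B v u}"

definition agreement_graph :: "('a \<Rightarrow> 'a \<Rightarrow> bool) \<Rightarrow> ('a \<Rightarrow> 'a \<Rightarrow> bool) \<Rightarrow> 'a \<Rightarrow> 'a \<Rightarrow> bool" where
  "agreement_graph A B v w \<longleftrightarrow> v \<noteq> w \<and> (A v w \<longleftrightarrow> B v w)"

lemma tournament_finite: "tournament V A \<Longrightarrow> finite V"
  by (simp add: tournament_def)

lemma card_doubleton_le: "card {x, y} \<le> 2"
  by (rule card_insert_le_m1) simp_all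

lemma card_gt_threshold_mult_le_sum:
  fixes f :: "'a \<Rightarrow> real"
  assumes "finite V" and "\<And>v. v \<in> V \<Longrightarrow> 0 \<le> f v"
  shows "real (card {v \<in> V. t < f v}) * t \<le> (\<Sum>v\<in>V. f v)"
proof -
  have "real (card {v \<in> V. t < f v}) * t = (\<Sum>v | v \<in> V \<and> t < f v. t)" by simp
  also have "\<dots> \<le> (\<Sum>v | v \<in> V \<and> t < f v. f v)" by (rule sum_mono) simp
  also have "\<dots> \<le> (\<Sum>v\<in>V. f v)" by (rule sum_mono2) (use assms in auto)
  finally show ?thesis .
qed

lemma disagreement_in_reversed_edges:
  assumes "tournament V A" "tournament V B" "v \<in> V" "u \<in> disagreements V A B v"
  shows "{v, u} \<in> reversed_edges V A B"
proof (cases "A v u")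
  case True
  then show ?thesis using assms(3,4) by (auto simp: disagreements_def reversed_edges_def)
next
  case False
  with assms have "u \<in> V" "u \<noteq> v" "A u v" "\<not> B u v"
    unfolding disagreements_def tournament_def by auto
  then have "{u, v} \<in> reversed_edges V A B" using assms(3) by (auto simp: reversed_edges_def)
  then show ?thesis by (simp add: insert_commute)
qed

lemma sum_card_disagreements_le:
  assumes "tournament V A" "tournament V B"
  shows "(\<Sum>v\<in>V. card (disagreements V A B v)) \<le> 2 * card (reversed_edges V A B)"
proof -
  let ?R = "reversed_edges V A B"
  let ?fibre = "\<lambda>e. {(v, u). {v, u} = e}"
  have fin: "finite V" using assms(1) by (rule tournament_finite)
  have fin_R: "finite ?R"
    by (rule finite_subset[of _ "Pow V"]) (auto simp: reversed_edges_def fin)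
  have card_fibre: "card (?fibre e) \<le> 2" if "e \<in> ?R" for e
  proof -
    from that obtain a b where "e = {a, b}" by (auto simp: reversed_edges_def)
    then have "?fibre e \<subseteq> {(a, b), (b, a)}" by (auto simp: doubleton_eq_iff)
    then have "card (?fibre e) \<le> card {(a, b), (b, a)}" by (rule card_mono[rotated]) simp
    also have "\<dots> \<le> 2" by (rule card_doubleton_le)
    finally show ?thesis .
  qed
  have "(\<Sum>v\<in>V. card (disagreements V A B v)) = card (Sigma V (disagreements V A B))"
    by (rule card_SigmaI[symmetric]) (use fin in \<open>auto simp: disagreements_def\<close>)
  also have "\<dots> \<le> card (\<Union>e\<in>?R. ?fibre e)"
  proof (rule card_mono)
    show "finite (\<Union>e\<in>?R. ?fibre e)"
      by (rule finite_subset[of _ "V \<times> V"]) (auto simp: reversed_edges_def doubleton_eq_iff fin)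
    show "Sigma V (disagreements V A B) \<subseteq> (\<Union>e\<in>?R. ?fibre e)"
      using disagreement_in_reversed_edges[OF assms] by blast
  qed
  also have "\<dots> \<le> (\<Sum>e\<in>?R. card (?fibre e))" by (rule card_UN_le[OF fin_R])
  also have "\<dots> \<le> (\<Sum>e\<in>?R. 2)" by (rule sum_mono) (rule card_fibre)
  finally show ?thesis by simp
qed

lemma card_many_disagreements_le:
  assumes "tournament V A" "tournament V B" "0 < \<delta>"
    and "real (card (reversed_edges V A B)) \<le> \<delta>\<^sup>2 * (real (card V))\<^sup>2"
  shows "real (card {v \<in> V. 2 * \<delta> * card V < card (disagreements V A B v)}) \<le> \<delta> * card V"
proof (cases "V = {}")
  case False
  let ?t = "2 * \<delta> * card V"
  have "?t > 0" using False tournament_finite[OF assms(1)] assms(3) by (simp add: card_gt_0_iff)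
  have "real (card {v \<in> V. ?t < card (disagreements V A B v)}) * ?t
      \<le> (\<Sum>v\<in>V. real (card (disagreements V A B v)))"
    by (rule card_gt_threshold_mult_le_sum) (use tournament_finite[OF assms(1)] in auto)
  also have "\<dots> \<le> 2 * real (card (reversed_edges V A B))"
    using sum_card_disagreements_le[OF assms(1,2)] by (simp flip: of_nat_sum)
  also have "\<dots> \<le> (\<delta> * card V) * ?t" using assms(4) by (simp add: power2_eq_square mult_ac)
  finally show ?thesis using \<open>?t > 0\<close> by (rule mult_right_le_imp_le)
qed simp

lemma transitive_tournament_imp_strict_lin_order_on:
  assumes "transitive_tournament V B" "S \<subseteq> V"
  shows "strict_lin_order_on S B"
  using assms unfolding transitive_tournament_def tournament_def strict_lin_order_on_def
  by (meson subsetD)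

lemma simple_graph_on_agreement_graph:
  assumes "tournament V A" "tournament V B" "S \<subseteq> V"
  shows "simple_graph_on S (agreement_graph A B)"
  using assms unfolding simple_graph_on_def agreement_graph_def tournament_def
  by (metis subsetD)

lemma consistent_agreement_graph:
  assumes "tournament V B" "S \<subseteq> V"
  shows "consistent S B (agreement_graph A B) A"
  using assms unfolding consistent_def agreement_graph_def tournament_def by auto

lemma non_neighbours_agreement_graph_subset:
  "S \<subseteq> V \<Longrightarrow> non_neighbours S (agreement_graph A B) v \<subseteq> disagreements V A B v"
  unfolding non_neighbours_def agreement_graph_def disagreements_def by auto

theorem lemma4p2:
  fixes V0 :: "'a set" and A :: "'a \<Rightarrow> 'a \<Rightarrow> bool" and \<delta> :: real
  assumes "0 < \<delta>" and "\<delta> < 1/2"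
    and "tournament V0 A"
    and "close_to_transitive V0 A (\<delta>\<^sup>2)"
  shows "\<exists>N::nat. real N \<ge> (1 - \<delta>) * real (card V0) \<and>
           (\<exists>S. S \<subseteq> V0 \<and> card S = N \<and>
              (\<exists>lt E. strict_lin_order_on S lt \<and> simple_graph_on S E \<and>
                 consistent S lt E A \<and>
                 (\<forall>v\<in>S. real (card (non_neighbours S E v)) \<le> 4 * \<delta> * real N)))"
proof -
  obtain B where B: "transitive_tournament V0 B"
    and reversed: "real (card (reversed_edges V0 A B)) \<le> \<delta>\<^sup>2 * (real (card V0))\<^sup>2"
    using assms(4) unfolding close_to_transitive_def by auto
  have "tournament V0 B" using B by (simp add: transitive_tournament_def)
  define Bad where "Bad = {v \<in> V0. 2 * \<delta> * card V0 < card (disagreements V0 A B v)}"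
  define S where "S = V0 - Bad"
  have "S \<subseteq> V0" by (auto simp: S_def)
  have "real (card Bad) \<le> \<delta> * card V0"
    unfolding Bad_def using card_many_disagreements_le[OF assms(3) \<open>tournament V0 B\<close> assms(1) reversed] .
  moreover have "card S = card V0 - card Bad" "card Bad \<le> card V0"
    using tournament_finite[OF assms(3)] by (auto simp: S_def Bad_def card_Diff_subset card_mono)
  ultimately have large: "(1 - \<delta>) * card V0 \<le> card S" by (simp add: algebra_simps)
  moreover have "\<delta> * card V0 \<le> 1/2 * card V0" using assms(2) by (intro mult_right_mono) auto
  ultimately have half: "real (card V0) \<le> 2 * card S" by (simp add: algebra_simps)
  have "real (card (non_neighbours S (agreement_graph A B) v)) \<le> 4 * \<delta> * card S" if "v \<in> S" for v
  proof -
    have "card (non_neighbours S (agreement_graph A B) v) \<le> card (disagreements V0 A B v)"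
      using non_neighbours_agreement_graph_subset[OF \<open>S \<subseteq> V0\<close>] tournament_finite[OF assms(3)]
      by (intro card_mono) (auto simp: disagreements_def)
    also have "real \<dots> \<le> 2 * \<delta> * card V0" using that by (auto simp: S_def Bad_def)
    also have "\<dots> \<le> 4 * \<delta> * card S" using half assms(1) by simp
    finally show ?thesis by simp
  qed
  then show ?thesis
    using large \<open>S \<subseteq> V0\<close> transitive_tournament_imp_strict_lin_order_on[OF B \<open>S \<subseteq> V0\<close>]
      simple_graph_on_agreement_graph[OF assms(3) \<open>tournament V0 B\<close> \<open>S \<subseteq> V0\<close>]
      consistent_agreement_graph[OF \<open>tournament V0 B\<close> \<open>S \<subseteq> V0\<close>]
    by blast
qed

end
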